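(* Let $\boldsymbol H:\mathbb T^N\to\mathbb T^N$ satisfy Assumption (H1) with datum $(E,\kappa)$. Then $\boldsymbol H$ is a local diffeomorphism, and at every point, for every $i\in[1,N]$ and $j\ne i$, $$|(D\boldsymbol H^{-1})_{ij}|<\kappa^{-1}\Big[E+\frac{E^2}{\kappa-E}\Big]N^{-1},\qquad |(D\boldsymbol H^{-1})_{ii}|\le\kappa^{-1}\Big[1+E\Big(E+\frac{E^2}{\kappa-E}\Big)N^{-1}\Big],$$ $$|(D\boldsymbol H^{-1})_{ii}|\ge|(D\boldsymbol H)_{ii}|^{-1}\Big(1-E\Big(E+\frac{E^2}{\kappa-E}\Big)N^{-1}\Big),$$ where $D\boldsymbol H^{-1}$ denotes the inverse matrix $(D\boldsymbol H)^{-1}$ at the point.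
   Context: $\mathbb T=\mathbb R/\mathbb Z$; derivatives of maps $\mathbb T^N\to\mathbb T^N$ are taken via lifts. Assumption (H1) with datum $(E,\kappa)$, $E,\kappa\ge0$, $\kappa-E>1$: $\boldsymbol H=(H_1,\dots,H_N)\in C^1(\mathbb T^N,\mathbb T^N)$ and $|\partial_iH_i|>\kappa$, $|\partial_jH_i|<EN^{-1}$ everywhere, for all $i$ and all $j\ne i$. *)

theory Defs
  imports "HOL-Analysis.Analysis"
begin

definition lattice_point :: "real ^ 'n \<Rightarrow> bool" where
  "lattice_point k \<longleftrightarrow> (\<forall>i. k $ i \<in> \<int>)"

text \<open>A map R^N -> R^N is the lift of a map of the torus T^N = R^N/Z^N iff
  integer translations of the argument change the value by integer vectors.\<close>
definition torus_lift :: "(real ^ 'n \<Rightarrow> real ^ 'n) \<Rightarrow> bool" where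
  "torus_lift F \<longleftrightarrow> (\<forall>x k. lattice_point k \<longrightarrow> lattice_point (F (x + k) - F x))"

definition C1_on :: "'a::euclidean_space set \<Rightarrow> ('a \<Rightarrow> 'b::euclidean_space) \<Rightarrow> bool" where
  "C1_on S f \<longleftrightarrow> (\<exists>f'. (\<forall>x\<in>S. (f has_derivative blinfun_apply (f' x)) (at x)) \<and> continuous_on S f')"

definition local_diffeomorphism :: "('a::euclidean_space \<Rightarrow> 'a) \<Rightarrow> bool" where
  "local_diffeomorphism f \<longleftrightarrow>
     (\<forall>x. \<exists>U V g. open U \<and> open V \<and> x \<in> U \<and> f ` U = V \<and>
          (\<forall>y\<in>U. g (f y) = y) \<and> (\<forall>z\<in>V. f (g z) = z) \<and> C1_on U f \<and> C1_on V g)"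

end

theory Submission
  imports Defs
begin

text \<open>Each \<open>A = DH x\<close> is uniformly diagonally dominant. If \<open>A f = e\<^sub>j\<close>, the row of a largest
  entry of \<open>f\<close> gives \<open>\<parallel>f\<parallel>\<^sub>\<infinity> \<le> 1/(\<kappa> - E)\<close> (the same argument with \<open>A f = 0\<close> gives invertibility);
  the row of a largest entry off position \<open>j\<close> then gives \<open>|f\<^sub>i| \<le> E/(N(\<kappa> - E)\<^sup>2)\<close> for \<open>i \<noteq> j\<close>,
  and row \<open>j\<close> pins \<open>|A\<^sub>j\<^sub>j f\<^sub>j|\<close> to within \<open>E\<^sup>2/(N(\<kappa> - E)\<^sup>2)\<close> of \<open>1\<close>. Taking for \<open>f\<close> the columns
  of \<open>A\<^sup>-\<^sup>1\<close> yields the entry bounds. The local diffeomorphism property is the inverse function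
  theorem, the derivative of the local inverse being continuous by Cramer's rule.\<close>

lemma matrix_inv_mult:
  fixes A :: "'a::semiring_1^'n^'n"
  assumes "invertible A"
  shows "A ** matrix_inv A = mat 1" and "matrix_inv A ** A = mat 1"
proof -
  have "\<exists>A'. A ** A' = mat 1 \<and> A' ** A = mat 1"
    using assms unfolding invertible_def by blast
  from someI_ex[OF this] show "A ** matrix_inv A = mat 1" "matrix_inv A ** A = mat 1"
    unfolding matrix_inv_def by auto
qed

lemma matrix_inv_column:
  fixes A :: "real^'n^'n"
  assumes "invertible A"
  shows "A *v column j (matrix_inv A) = axis j 1"
proof -
  have "A *v column j (matrix_inv A) = (A ** matrix_inv A) *v axis j 1"
    by (simp only: matrix_vector_mult_basis[symmetric] matrix_vector_mul_assoc)
  then show ?thesis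
    by (simp only: matrix_inv_mult(1)[OF assms] matrix_vector_mul_lid)
qed

lemma finite_index_of_max:
  fixes g :: "'a \<Rightarrow> 'b::linorder"
  assumes "finite S" and "S \<noteq> {}"
  obtains i where "i \<in> S" and "\<And>k. k \<in> S \<Longrightarrow> g k \<le> g i"
proof -
  have "Max (g ` S) \<in> g ` S"
    using assms by simp
  then obtain i where "i \<in> S" "g i = Max (g ` S)"
    by (metis imageE)
  with assms(1) show thesis
    by (intro that) auto
qed

lemma diagonal_term_bounds:
  fixes A :: "real^'n^'n" and f :: "real^'n"
  shows "\<bar>A$i$i\<bar> * \<bar>f$i\<bar> \<le> \<bar>(A *v f)$i\<bar> + (\<Sum>k\<in>UNIV-{i}. \<bar>A$i$k\<bar> * \<bar>f$k\<bar>)"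
    and "\<bar>(A *v f)$i\<bar> - (\<Sum>k\<in>UNIV-{i}. \<bar>A$i$k\<bar> * \<bar>f$k\<bar>) \<le> \<bar>A$i$i\<bar> * \<bar>f$i\<bar>"
proof -
  let ?r = "\<Sum>k\<in>UNIV-{i}. A$i$k * f$k"
  have "(A *v f)$i = A$i$i * f$i + ?r"
    by (simp add: matrix_vector_mult_def sum.remove[of UNIV i])
  moreover have "\<bar>?r\<bar> \<le> (\<Sum>k\<in>UNIV-{i}. \<bar>A$i$k\<bar> * \<bar>f$k\<bar>)"
    using sum_abs[of "\<lambda>k. A$i$k * f$k" "UNIV-{i}"] by (simp add: abs_mult)
  ultimately show "\<bar>A$i$i\<bar> * \<bar>f$i\<bar> \<le> \<bar>(A *v f)$i\<bar> + (\<Sum>k\<in>UNIV-{i}. \<bar>A$i$k\<bar> * \<bar>f$k\<bar>)"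
    and "\<bar>(A *v f)$i\<bar> - (\<Sum>k\<in>UNIV-{i}. \<bar>A$i$k\<bar> * \<bar>f$k\<bar>) \<le> \<bar>A$i$i\<bar> * \<bar>f$i\<bar>"
    by (auto simp: abs_mult[symmetric] abs_le_iff)
qed

lemma second_order_term_le:
  fixes E \<kappa> N :: real
  assumes "0 \<le> E" and "1 < \<kappa> - E" and "0 < N"
  shows "E\<^sup>2 / (N * (\<kappa> - E)\<^sup>2) \<le> E * (E + E\<^sup>2 / (\<kappa> - E)) / N"
proof -
  have "1 / (\<kappa> - E)\<^sup>2 \<le> 1 / (\<kappa> - E)"
    using assms(2) by (simp add: power2_eq_square divide_le_eq)
  also have "\<dots> \<le> \<kappa> / (\<kappa> - E)"
    using assms(1,2) by (simp add: divide_right_mono)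
  finally have ratio: "1 / (\<kappa> - E)\<^sup>2 \<le> \<kappa> / (\<kappa> - E)" .
  have "E\<^sup>2 / (N * (\<kappa> - E)\<^sup>2) = E\<^sup>2 / N * (1 / (\<kappa> - E)\<^sup>2)"
    by simp
  also have "\<dots> \<le> E\<^sup>2 / N * (\<kappa> / (\<kappa> - E))"
    using ratio assms(3) by (intro mult_left_mono) auto
  also have "\<dots> = E * (E + E\<^sup>2 / (\<kappa> - E)) / N"
    using assms(2) by (simp add: field_simps power2_eq_square)
  finally show ?thesis .
qed

locale uniformly_diagonally_dominant =
  fixes A :: "real^'n^'n" and E \<kappa> :: real
  assumes E_nonneg: "0 \<le> E" and E_less: "E < \<kappa>"
    and diagonal: "\<And>i. \<kappa> < \<bar>A$i$i\<bar>"
    and off_diagonal: "\<And>i k. k \<noteq> i \<Longrightarrow> \<bar>A$i$k\<bar> \<le> E / CARD('n)"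
begin

lemma off_diagonal_sum_le:
  assumes "\<And>k. k \<noteq> i \<Longrightarrow> \<bar>f$k\<bar> \<le> g k"
  shows "(\<Sum>k\<in>UNIV-{i}. \<bar>A$i$k\<bar> * \<bar>f$k\<bar>) \<le> E / CARD('n) * (\<Sum>k\<in>UNIV-{i}. g k)"
  unfolding sum_distrib_left
proof (rule sum_mono)
  fix k assume "k \<in> UNIV - {i}"
  then have "\<bar>A$i$k\<bar> \<le> E / CARD('n)" "\<bar>f$k\<bar> \<le> g k"
    using off_diagonal assms by auto
  moreover have "0 \<le> E / CARD('n)"
    using E_nonneg by simp
  ultimately show "\<bar>A$i$k\<bar> * \<bar>f$k\<bar> \<le> E / CARD('n) * g k"
    by (intro mult_mono) auto
qed

lemma off_diagonal_row_weight_le: "E / CARD('n) * real (card (UNIV - {i::'n})) \<le> E"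
  using E_nonneg by (simp add: card_Diff_singleton field_simps)

lemma off_diagonal_sum_le_max:
  assumes "\<And>k. k \<noteq> i \<Longrightarrow> \<bar>f$k\<bar> \<le> m" and "0 \<le> m"
  shows "(\<Sum>k\<in>UNIV-{i}. \<bar>A$i$k\<bar> * \<bar>f$k\<bar>) \<le> E * m"
proof -
  have "(\<Sum>k\<in>UNIV-{i}. \<bar>A$i$k\<bar> * \<bar>f$k\<bar>) \<le> E / CARD('n) * real (card (UNIV - {i})) * m"
    using off_diagonal_sum_le[of i f "\<lambda>_. m"] assms(1) by simp
  also have "\<dots> \<le> E * m"
    using off_diagonal_row_weight_le assms(2) by (rule mult_right_mono)
  finally show ?thesis .
qed

lemma off_diagonal_sum_le_max_except:
  assumes "i \<noteq> j" and "\<And>k. k \<noteq> i \<Longrightarrow> k \<noteq> j \<Longrightarrow> \<bar>f$k\<bar> \<le> s" and "0 \<le> s"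
  shows "(\<Sum>k\<in>UNIV-{i}. \<bar>A$i$k\<bar> * \<bar>f$k\<bar>) \<le> E * s + E / CARD('n) * \<bar>f$j\<bar>"
proof -
  have "(\<Sum>k\<in>UNIV-{i}. \<bar>A$i$k\<bar> * \<bar>f$k\<bar>)
      \<le> E / CARD('n) * (\<Sum>k\<in>UNIV-{i}. s + (if k = j then \<bar>f$j\<bar> else 0))"
    by (rule off_diagonal_sum_le) (use assms in auto)
  also have "\<dots> = E / CARD('n) * real (card (UNIV - {i})) * s + E / CARD('n) * \<bar>f$j\<bar>"
    using assms(1) by (simp add: sum.distrib distrib_left)
  also have "\<dots> \<le> E * s + E / CARD('n) * \<bar>f$j\<bar>"
    using mult_right_mono[OF off_diagonal_row_weight_le assms(3)] by simp
  finally show ?thesis .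
qed

lemma max_norm_le:
  assumes "\<And>i. \<bar>(A *v f)$i\<bar> \<le> r"
  shows "\<bar>f$k\<bar> \<le> r / (\<kappa> - E)"
proof -
  obtain i where max: "\<And>k. \<bar>f$k\<bar> \<le> \<bar>f$i\<bar>"
    using finite_index_of_max[of UNIV "\<lambda>k. \<bar>f$k\<bar>"] by auto
  have "\<kappa> * \<bar>f$i\<bar> \<le> \<bar>A$i$i\<bar> * \<bar>f$i\<bar>"
    using diagonal[of i] by (simp add: mult_right_mono)
  also have "\<dots> \<le> r + E * \<bar>f$i\<bar>"
    using diagonal_term_bounds(1)[of A i f] off_diagonal_sum_le_max[of i f "\<bar>f$i\<bar>"] max assms[of i]
    by simp
  finally have "(\<kappa> - E) * \<bar>f$i\<bar> \<le> r"
    by (simp add: algebra_simps)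
  then show ?thesis
    using max[of k] E_less by (simp add: pos_le_divide_eq mult.commute order_trans)
qed

lemma invertible: "invertible A"
proof -
  have "f = 0" if "A *v f = 0" for f
    using max_norm_le[of f 0] that by (simp add: vec_eq_iff)
  then show ?thesis
    unfolding invertible_left_inverse matrix_left_invertible_ker by blast
qed

lemma solution_off_diagonal_le:
  assumes sol: "A *v f = axis j 1" and "i \<noteq> j"
  shows "\<bar>f$i\<bar> \<le> E / (CARD('n) * (\<kappa> - E)\<^sup>2)"
proof -
  obtain l where "l \<noteq> j" and max: "\<And>k. k \<noteq> j \<Longrightarrow> \<bar>f$k\<bar> \<le> \<bar>f$l\<bar>"
  proof (rule finite_index_of_max[of "UNIV - {j}" "\<lambda>k. \<bar>f$k\<bar>"])
    show "UNIV - {j} \<noteq> {}"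
      using \<open>i \<noteq> j\<close> by blast
  qed auto
  have "\<bar>f$j\<bar> \<le> 1 / (\<kappa> - E)"
    by (rule max_norm_le) (simp add: sol axis_def)
  then have fj: "E / CARD('n) * \<bar>f$j\<bar> \<le> E / CARD('n) * (1 / (\<kappa> - E))"
    using E_nonneg by (intro mult_left_mono) auto
  have "\<kappa> * \<bar>f$l\<bar> \<le> \<bar>A$l$l\<bar> * \<bar>f$l\<bar>"
    using diagonal[of l] by (simp add: mult_right_mono)
  also have "\<dots> \<le> E * \<bar>f$l\<bar> + E / CARD('n) * \<bar>f$j\<bar>"
    using diagonal_term_bounds(1)[of A l f] off_diagonal_sum_le_max_except[of l j f "\<bar>f$l\<bar>"]
      max \<open>l \<noteq> j\<close> by (simp add: sol axis_def)
  finally have "(\<kappa> - E) * \<bar>f$l\<bar> \<le> E / CARD('n) * (1 / (\<kappa> - E))"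
    using fj by (simp add: left_diff_distrib)
  then have "\<bar>f$l\<bar> \<le> E / CARD('n) * (1 / (\<kappa> - E)) / (\<kappa> - E)"
    using E_less by (subst pos_le_divide_eq) (auto simp only: mult.commute diff_gt_0_iff_gt)
  also have "\<dots> = E / (CARD('n) * (\<kappa> - E)\<^sup>2)"
    by (simp add: power2_eq_square)
  finally have "\<bar>f$l\<bar> \<le> E / (CARD('n) * (\<kappa> - E)\<^sup>2)" .
  then show ?thesis
    using max[OF \<open>i \<noteq> j\<close>] by linarith
qed

lemma solution_diagonal_bounds:
  assumes sol: "A *v f = axis j 1"
  shows "\<bar>A$j$j\<bar> * \<bar>f$j\<bar> \<le> 1 + E\<^sup>2 / (CARD('n) * (\<kappa> - E)\<^sup>2)"
    and "1 - E\<^sup>2 / (CARD('n) * (\<kappa> - E)\<^sup>2) \<le> \<bar>A$j$j\<bar> * \<bar>f$j\<bar>"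
proof -
  have "(\<Sum>k\<in>UNIV-{j}. \<bar>A$j$k\<bar> * \<bar>f$k\<bar>) \<le> E * (E / (CARD('n) * (\<kappa> - E)\<^sup>2))"
    using E_nonneg by (intro off_diagonal_sum_le_max solution_off_diagonal_le[OF sol]) auto
  then have "(\<Sum>k\<in>UNIV-{j}. \<bar>A$j$k\<bar> * \<bar>f$k\<bar>) \<le> E\<^sup>2 / (CARD('n) * (\<kappa> - E)\<^sup>2)"
    by (simp add: power2_eq_square)
  then show "\<bar>A$j$j\<bar> * \<bar>f$j\<bar> \<le> 1 + E\<^sup>2 / (CARD('n) * (\<kappa> - E)\<^sup>2)"
    and "1 - E\<^sup>2 / (CARD('n) * (\<kappa> - E)\<^sup>2) \<le> \<bar>A$j$j\<bar> * \<bar>f$j\<bar>"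
    using diagonal_term_bounds[where A = A and i = j and f = f] by (simp_all add: sol)
qed

lemma matrix_inv_off_diagonal_less:
  assumes "0 < E" and "1 < \<kappa> - E" and "i \<noteq> j"
  shows "\<bar>matrix_inv A $ i $ j\<bar> < 1 / \<kappa> * (E + E\<^sup>2 / (\<kappa> - E)) / CARD('n)"
proof -
  have "\<bar>matrix_inv A $ i $ j\<bar> \<le> E / (CARD('n) * (\<kappa> - E)\<^sup>2)"
    using solution_off_diagonal_le[OF matrix_inv_column[OF invertible] \<open>i \<noteq> j\<close>]
    by (simp add: column_def)
  also have "\<dots> < E / (CARD('n) * (\<kappa> - E))"
    using assms(1,2) by (intro divide_strict_left_mono) (simp_all add: power2_eq_square)
  also have "\<dots> = 1 / \<kappa> * (E + E\<^sup>2 / (\<kappa> - E)) / CARD('n)"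
    using assms(2) E_nonneg by (simp add: field_simps power2_eq_square)
  finally show ?thesis .
qed

lemma matrix_inv_diagonal_le:
  assumes "1 < \<kappa> - E"
  shows "\<bar>matrix_inv A $ i $ i\<bar> \<le> 1 / \<kappa> * (1 + E * (E + E\<^sup>2 / (\<kappa> - E)) / CARD('n))"
proof -
  have "\<kappa> * \<bar>matrix_inv A $ i $ i\<bar> \<le> \<bar>A$i$i\<bar> * \<bar>matrix_inv A $ i $ i\<bar>"
    using diagonal[of i] by (simp add: mult_right_mono)
  also have "\<dots> \<le> 1 + E\<^sup>2 / (CARD('n) * (\<kappa> - E)\<^sup>2)"
    using solution_diagonal_bounds(1)[OF matrix_inv_column[OF invertible, of i]]
    by (simp add: column_def)
  also have "\<dots> \<le> 1 + E * (E + E\<^sup>2 / (\<kappa> - E)) / CARD('n)"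
    using second_order_term_le[OF E_nonneg assms, of "CARD('n)"] by simp
  finally show ?thesis
    using assms E_nonneg by (simp add: pos_le_divide_eq mult.commute)
qed

lemma matrix_inv_diagonal_ge:
  assumes "1 < \<kappa> - E"
  shows "1 / \<bar>A$i$i\<bar> * (1 - E * (E + E\<^sup>2 / (\<kappa> - E)) / CARD('n)) \<le> \<bar>matrix_inv A $ i $ i\<bar>"
proof -
  have "1 - E\<^sup>2 / (CARD('n) * (\<kappa> - E)\<^sup>2) \<le> \<bar>A$i$i\<bar> * \<bar>matrix_inv A $ i $ i\<bar>"
    using solution_diagonal_bounds(2)[OF matrix_inv_column[OF invertible, of i]]
    by (simp add: column_def)
  then have "1 - E * (E + E\<^sup>2 / (\<kappa> - E)) / CARD('n) \<le> \<bar>A$i$i\<bar> * \<bar>matrix_inv A $ i $ i\<bar>"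
    using second_order_term_le[OF E_nonneg assms, of "CARD('n)"] by simp
  moreover have "0 < \<bar>A$i$i\<bar>"
    using diagonal[of i] assms E_nonneg by linarith
  ultimately show ?thesis
    by (simp add: field_simps)
qed

end

lemma matrix_inv_Cramer:
  fixes A :: "real^'n^'n"
  assumes "det A \<noteq> 0"
  shows "matrix_inv A $ k $ j = det (\<chi> i l. if l = k then axis j 1 $ i else A$i$l) / det A"
proof -
  have "A *v column j (matrix_inv A) = axis j 1"
    using assms by (simp add: matrix_inv_column invertible_det_nz)
  then have "column j (matrix_inv A) = (\<chi> k. det (\<chi> i l. if l = k then axis j 1 $ i else A$i$l) / det A)"
    using cramer[OF assms] by blast
  then show ?thesis
    by (simp add: column_def vec_eq_iff)
qed

lemma continuous_on_det:
  fixes F :: "'a::topological_space \<Rightarrow> real^'n^'n"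
  assumes "continuous_on S F"
  shows "continuous_on S (\<lambda>x. det (F x))"
  unfolding det_def by (intro continuous_intros continuous_on_component assms)

lemma continuous_on_matrix_inv:
  fixes F :: "'a::topological_space \<Rightarrow> real^'n^'n"
  assumes "continuous_on S F" and "\<And>x. x \<in> S \<Longrightarrow> invertible (F x)"
  shows "continuous_on S (\<lambda>x. matrix_inv (F x))"
proof -
  have det_nz: "\<And>x. x \<in> S \<Longrightarrow> det (F x) \<noteq> 0"
    using assms(2) invertible_det_nz by blast
  have replaced: "continuous_on S (\<lambda>x. (\<chi> i l. if l = k then axis j 1 $ i else F x$i$l) :: real^'n^'n)"
    for k j
  proof (intro continuous_on_vec_lambda)
    fix i l
    show "continuous_on S (\<lambda>x. if l = k then axis j 1 $ i else F x $ i $ l)"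
      by (cases "l = k") (simp_all add: continuous_on_component assms(1))
  qed
  have "continuous_on S (\<lambda>x. det (\<chi> i l. if l = k then axis j 1 $ i else F x$i$l) / det (F x))" for k j
    by (intro continuous_on_divide continuous_on_det replaced assms(1)) (simp add: det_nz)
  then have "continuous_on S (\<lambda>x. (\<chi> k j. det (\<chi> i l. if l = k then axis j 1 $ i else F x$i$l) / det (F x)) :: real^'n^'n)"
    by (intro continuous_on_vec_lambda)
  then show ?thesis
    by (rule continuous_on_eq) (simp add: vec_eq_iff matrix_inv_Cramer det_nz)
qed

lemma blinfun_apply_matrix:
  fixes M :: "real^'n^'m"
  shows "blinfun_apply (Blinfun ((*v) M)) = (*v) M"
  by (simp add: bounded_linear_Blinfun_apply)

lemma continuous_on_matrix_blinfun:
  fixes M :: "'a::topological_space \<Rightarrow> real^'n^'m"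
  assumes "continuous_on S M"
  shows "continuous_on S (\<lambda>x. Blinfun ((*v) (M x)))"
proof -
  have "Blinfun ((*v) (M x)) = blinfun_of_matrix (\<lambda>i j. (M x *v j) \<bullet> i)" for x
    using blinfun_of_matrix_works[of "Blinfun ((*v) (M x))"] by (simp add: blinfun_apply_matrix)
  moreover have "continuous_on S (\<lambda>x. blinfun_of_matrix (\<lambda>i j. (M x *v j) \<bullet> i))"
    unfolding inner_vec_def matrix_vector_mult_def
    by (intro continuous_on_blinfun_of_matrix continuous_intros continuous_on_component assms)
  ultimately show ?thesis
    by simp
qed

lemma local_diffeomorphism_if_invertible_derivative:
  fixes H :: "real^'n \<Rightarrow> real^'n" and DH :: "real^'n \<Rightarrow> real^'n^'n"
  assumes deriv: "\<And>x. (H has_derivative (*v) (DH x)) (at x)"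
    and cont: "continuous_on UNIV DH"
    and inv: "\<And>x. invertible (DH x)"
  shows "local_diffeomorphism H"
  unfolding local_diffeomorphism_def
proof
  fix x0
  define F' where "F' x = Blinfun ((*v) (DH x))" for x
  define G where "G x = Blinfun ((*v) (matrix_inv (DH x)))" for x
  have derivF': "(H has_derivative blinfun_apply (F' x)) (at x)" for x
    using deriv by (simp add: F'_def blinfun_apply_matrix)
  have contF': "continuous_on S F'" for S
    unfolding F'_def by (intro continuous_on_matrix_blinfun continuous_on_subset[OF cont]) simp
  have "G x0 o\<^sub>L F' x0 = id_blinfun"
    by (rule blinfun_eqI)
      (simp add: F'_def G_def blinfun_apply_matrix matrix_vector_mul_assoc matrix_inv_mult(2)[OF inv])
  then obtain U V g g' where "open U" "x0 \<in> U" "open V" and hom: "homeomorphism U V H g"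
    and derivg: "\<And>y. y \<in> V \<Longrightarrow> (g has_derivative g' y) (at y)"
    and g': "\<And>y. y \<in> V \<Longrightarrow> g' y = inv (blinfun_apply (F' (g y)))"
    by (rule inverse_function_theorem[OF open_UNIV derivF' contF' UNIV_I]) blast
  have "inv ((*v) (DH x)) = (*v) (matrix_inv (DH x))" for x
    by (rule inv_unique_comp) (simp_all add: fun_eq_iff matrix_vector_mul_assoc matrix_inv_mult[OF inv])
  then have derivG: "(g has_derivative blinfun_apply (G (g y))) (at y)" if "y \<in> V" for y
    using derivg[OF that] g'[OF that] by (simp add: F'_def G_def blinfun_apply_matrix)
  have "continuous_on UNIV (\<lambda>x. matrix_inv (DH x))"
    using cont inv by (rule continuous_on_matrix_inv)
  then have "continuous_on V (\<lambda>y. G (g y))"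
    unfolding G_def
    by (intro continuous_on_matrix_blinfun continuous_on_compose2[OF _ homeomorphism_cont2[OF hom]]) auto
  then have "C1_on V g"
    unfolding C1_on_def using derivG by (intro exI[of _ "\<lambda>y. G (g y)"]) simp
  moreover have "C1_on U H"
    unfolding C1_on_def using derivF' contF' by (intro exI[of _ F']) simp
  moreover have "H ` U = V" "\<forall>y\<in>U. g (H y) = y" "\<forall>z\<in>V. H (g z) = z"
    using hom unfolding homeomorphism_def by auto
  ultimately show "\<exists>U V g. open U \<and> open V \<and> x0 \<in> U \<and> H ` U = V \<and>
          (\<forall>y\<in>U. g (H y) = y) \<and> (\<forall>z\<in>V. H (g z) = z) \<and> C1_on U H \<and> C1_on V g"
    using \<open>open U\<close> \<open>open V\<close> \<open>x0 \<in> U\<close> by blast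
qed

theorem propositionB1:
  fixes H :: "real ^ 'n \<Rightarrow> real ^ 'n"
    and DH :: "real ^ 'n \<Rightarrow> real ^ 'n ^ 'n"
    and E \<kappa> :: real
  assumes lift: "torus_lift H"
    and deriv: "\<And>x. (H has_derivative (\<lambda>h. DH x *v h)) (at x)"
    and cont: "continuous_on UNIV DH"
    and E_nonneg: "E \<ge> 0" and kappa_nonneg: "\<kappa> \<ge> 0" and gap: "\<kappa> - E > 1"
    and diag: "\<And>x i. \<bar>DH x $ i $ i\<bar> > \<kappa>"
    and offdiag: "\<And>x i j. j \<noteq> i \<Longrightarrow> \<bar>DH x $ i $ j\<bar> < E / real CARD('n)"
  shows "local_diffeomorphism H \<and>
    (\<forall>x. invertible (DH x) \<and>
      (\<forall>i j. j \<noteq> i \<longrightarrow>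
         \<bar>matrix_inv (DH x) $ i $ j\<bar> < (1 / \<kappa>) * (E + E\<^sup>2 / (\<kappa> - E)) / real CARD('n)) \<and>
      (\<forall>i. \<bar>matrix_inv (DH x) $ i $ i\<bar>
             \<le> (1 / \<kappa>) * (1 + E * (E + E\<^sup>2 / (\<kappa> - E)) / real CARD('n))) \<and>
      (\<forall>i. \<bar>matrix_inv (DH x) $ i $ i\<bar>
             \<ge> (1 / \<bar>DH x $ i $ i\<bar>) * (1 - E * (E + E\<^sup>2 / (\<kappa> - E)) / real CARD('n))))"
proof -
  have dominant: "uniformly_diagonally_dominant (DH x) E \<kappa>" for x
    using E_nonneg gap diag offdiag by unfold_locales (auto intro: less_imp_le)
  have invertible: "invertible (DH x)" for x
    using dominant by (rule uniformly_diagonally_dominant.invertible)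
  have E_pos: "0 < E" if "j \<noteq> i" for i j :: 'n
  proof -
    have "0 < E / CARD('n)"
      using offdiag[OF that, of 0] abs_ge_zero[of "DH 0 $ i $ j"] by linarith
    then show ?thesis
      by (simp add: zero_less_divide_iff)
  qed
  show ?thesis
  proof (intro conjI allI impI)
    show "local_diffeomorphism H"
      using deriv cont invertible by (rule local_diffeomorphism_if_invertible_derivative)
  next
    fix x and i j :: 'n
    assume "j \<noteq> i"
    then show "\<bar>matrix_inv (DH x) $ i $ j\<bar> < (1 / \<kappa>) * (E + E\<^sup>2 / (\<kappa> - E)) / real CARD('n)"
      using uniformly_diagonally_dominant.matrix_inv_off_diagonal_less[OF dominant E_pos gap] by auto
  qed (use invertible uniformly_diagonally_dominant.matrix_inv_diagonal_le[OF dominant gap]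
      uniformly_diagonally_dominant.matrix_inv_diagonal_ge[OF dominant gap] in auto)
qed

end
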